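(* Let $(\alpha_n)_{n\in\mathbb N}$ be a sequence of positive integers with $\log\alpha_n/n\to\infty$. Then there exists a perfectly balanced NCIFS $\Phi$ on a set $X\subset\mathbb R^d$ such that: (a) $\# I^{(n)}\le\alpha_n$ for all $n$; (b) $\overline c_n:=\max_{a\in I^{(n)}}\|D\phi^{(n)}_a\|\to0$ as $n\to\infty$; (c) $\operatorname{HD}(J(\Phi))=0$ and $B(\Phi)=d$.
   Context: Here $X\subset\mathbb R^d$ is a compact set equal to the closure of its interior, with $\partial X$ smooth or $X$ convex (for example a cube). $\|D\phi\|:=\sup_{x\in X}|\phi'(x)|$ for a conformal map $\phi$. An NCIFS $\Phi$ on $X$ is a sequence $\Phi^{(j)}=(\phi^{(j)}_i:X\to X)_{i\in I^{(j)}}$, $j\ge1$, of families indexed by finite or countably infinite sets, satisfying: - (open set condition) images of $\operatorname{int}X$ under distinct maps of the same $\Phi^{(j)}$ are disjoint; - (conformality) there is an open connected $V\supset X$ such that all maps extend to $C^1$ conformal diffeomorphisms of $V$ into $V$; - (bounded distortion) there is $K\ge1$ with $|\phi'(x)|\le K|\phi'(y)|$ for $x,y\in V$ and every composition $\phi^{(k)}_{\omega_k}\circ\cdots\circ\phi^{(l)}_{\omega_l}$; - (uniform contraction) $\|D\phi^{(j)}_i\|\le\eta<1$ for all $i,j$. $\Phi$ is perfectly balanced if all maps are affine similarities and, for each $n$, all maps in $\Phi^{(n)}$ have the same contraction ratio. For $\omega\in I^n=\prod_{j\le n}I^{(j)}$ let $\phi_\omega=\phi^{(1)}_{\omega_1}\circ\cdots\circ\phi^{(n)}_{\omega_n}$.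 Define $J(\Phi)=\bigcap_n\bigcup_{\omega\in I^n}\phi_\omega(X)$, $Z_n(t)=\sum_{\omega\in I^n}\|D\phi_\omega\|^t$, $\underline P(t)=\liminf_n\frac1n\log Z_n(t)$ and $B(\Phi)=\sup\{t\ge0:\underline P(t)>0\}$. $\operatorname{HD}$ is Hausdorff dimension. *)

theory Defs
  imports "HOL-Analysis.Analysis"
begin

definition dnorm :: "('a::euclidean_space \<Rightarrow> 'a) \<Rightarrow> 'a \<Rightarrow> real" where
  "dnorm f x = onorm (frechet_derivative f (at x))"

definition normD :: "'a::euclidean_space set \<Rightarrow> ('a \<Rightarrow> 'a) \<Rightarrow> real" where
  "normD X f = (SUP x\<in>X. dnorm f x)"

definition conformal_C1_on :: "'a::euclidean_space set \<Rightarrow> ('a \<Rightarrow> 'a) \<Rightarrow> bool" where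
  "conformal_C1_on V f \<longleftrightarrow> inj_on f V \<and> f ` V \<subseteq> V \<and>
     (\<exists>f' :: 'a \<Rightarrow> ('a \<Rightarrow>\<^sub>L 'a). continuous_on V f' \<and>
        (\<forall>x\<in>V. (f has_derivative blinfun_apply (f' x)) (at x) \<and>
                 (\<exists>c>0. \<forall>v. norm (blinfun_apply (f' x) v) = c * norm v)))"

text \<open>Levels are indexed by j \<ge> 1 (level 0 is ignored); the index set of level j is
  a set of naturals (hence finite or countably infinite); the maps are phi j i.\<close>

fun cmp :: "(nat \<Rightarrow> nat \<Rightarrow> 'a \<Rightarrow> 'a) \<Rightarrow> (nat \<Rightarrow> nat) \<Rightarrow> nat \<Rightarrow> nat \<Rightarrow> 'a \<Rightarrow> 'a" where
  "cmp \<phi> \<omega> k 0 = id"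
| "cmp \<phi> \<omega> k (Suc m) = \<phi> k (\<omega> k) \<circ> cmp \<phi> \<omega> (Suc k) m"

definition words :: "(nat \<Rightarrow> nat set) \<Rightarrow> nat \<Rightarrow> (nat \<Rightarrow> nat) set" where
  "words I n = Pi\<^sub>E {1..n} I"

text \<open>Standing assumptions on X (we use the convex alternative).\<close>
definition admissible_X :: "'a::euclidean_space set \<Rightarrow> bool" where
  "admissible_X X \<longleftrightarrow> compact X \<and> closure (interior X) = X \<and> interior X \<noteq> {} \<and> convex X"

definition NCIFS :: "'a::euclidean_space set \<Rightarrow> (nat \<Rightarrow> nat set) \<Rightarrow> (nat \<Rightarrow> nat \<Rightarrow> 'a \<Rightarrow> 'a) \<Rightarrow> bool" where
  "NCIFS X I \<phi> \<longleftrightarrow> admissible_X X \<and>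
     (\<forall>j\<ge>1. \<forall>i\<in>I j. \<phi> j i ` X \<subseteq> X) \<and>
     (\<forall>j\<ge>1. \<forall>i\<in>I j. \<forall>i'\<in>I j. i \<noteq> i' \<longrightarrow> \<phi> j i ` interior X \<inter> \<phi> j i' ` interior X = {}) \<and>
     (\<exists>V. open V \<and> connected V \<and> X \<subseteq> V \<and>
        (\<forall>j\<ge>1. \<forall>i\<in>I j. conformal_C1_on V (\<phi> j i)) \<and>
        (\<exists>K\<ge>1. \<forall>k\<ge>1. \<forall>m. \<forall>\<omega>. (\<forall>j\<in>{k..<k+m}. \<omega> j \<in> I j) \<longrightarrow>
            (\<forall>x\<in>V. \<forall>y\<in>V. dnorm (cmp \<phi> \<omega> k m) x \<le> K * dnorm (cmp \<phi> \<omega> k m) y))) \<and>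
     (\<exists>\<eta><1. \<forall>j\<ge>1. \<forall>i\<in>I j. normD X (\<phi> j i) \<le> \<eta>)"

definition affine_similarity :: "real \<Rightarrow> ('a::euclidean_space \<Rightarrow> 'a) \<Rightarrow> bool" where
  "affine_similarity r f \<longleftrightarrow> r > 0 \<and>
     (\<exists>Q b. linear Q \<and> (\<forall>x. norm (Q x) = norm x) \<and> (\<forall>x. f x = r *\<^sub>R Q x + b))"

definition perfectly_balanced :: "(nat \<Rightarrow> nat set) \<Rightarrow> (nat \<Rightarrow> nat \<Rightarrow> 'a::euclidean_space \<Rightarrow> 'a) \<Rightarrow> bool" where
  "perfectly_balanced I \<phi> \<longleftrightarrow> (\<forall>n\<ge>1. \<exists>r. \<forall>i\<in>I n. affine_similarity r (\<phi> n i))"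

definition limit_set :: "'a set \<Rightarrow> (nat \<Rightarrow> nat set) \<Rightarrow> (nat \<Rightarrow> nat \<Rightarrow> 'a \<Rightarrow> 'a) \<Rightarrow> 'a set" where
  "limit_set X I \<phi> = (\<Inter>n. \<Union>\<omega>\<in>words I n. cmp \<phi> \<omega> 1 n ` X)"

text \<open>Z_n(t), possibly infinite (countable sum of nonnegative terms).\<close>
definition Zsum :: "'a::euclidean_space set \<Rightarrow> (nat \<Rightarrow> nat set) \<Rightarrow> (nat \<Rightarrow> nat \<Rightarrow> 'a \<Rightarrow> 'a) \<Rightarrow> nat \<Rightarrow> real \<Rightarrow> ennreal" where
  "Zsum X I \<phi> n t = (\<integral>\<^sup>+ \<omega>. ennreal (normD X (cmp \<phi> \<omega> 1 n) powr t) \<partial>count_space (words I n))"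

definition lnE :: "ennreal \<Rightarrow> ereal" where
  "lnE z = (if z = 0 then -\<infinity> else if z = top then \<infinity> else ereal (ln (enn2real z)))"

definition lower_pressure :: "'a::euclidean_space set \<Rightarrow> (nat \<Rightarrow> nat set) \<Rightarrow> (nat \<Rightarrow> nat \<Rightarrow> 'a \<Rightarrow> 'a) \<Rightarrow> real \<Rightarrow> ereal" where
  "lower_pressure X I \<phi> t = liminf (\<lambda>n. lnE (Zsum X I \<phi> n t) / ereal (real n))"

definition bowen_param :: "'a::euclidean_space set \<Rightarrow> (nat \<Rightarrow> nat set) \<Rightarrow> (nat \<Rightarrow> nat \<Rightarrow> 'a \<Rightarrow> 'a) \<Rightarrow> ereal" where
  "bowen_param X I \<phi> = Sup (ereal ` {t. t \<ge> 0 \<and> lower_pressure X I \<phi> t > 0})"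

definition hweight :: "real \<Rightarrow> 'a::metric_space set \<Rightarrow> ennreal" where
  "hweight s U = (if U = {} then 0 else if s = 0 then 1 else ennreal (diameter U powr s))"

definition hausdorff_content :: "real \<Rightarrow> real \<Rightarrow> 'a::metric_space set \<Rightarrow> ennreal" where
  "hausdorff_content \<delta> s A = (INF U\<in>{U :: nat \<Rightarrow> 'a set. A \<subseteq> (\<Union>i. U i) \<and>
       (\<forall>i. bounded (U i) \<and> diameter (U i) \<le> \<delta>)}. \<Sum>i. hweight s (U i))"

definition hausdorff_measure :: "real \<Rightarrow> 'a::metric_space set \<Rightarrow> ennreal" where
  "hausdorff_measure s A = (SUP \<delta>\<in>{0<..}. hausdorff_content \<delta> s A)"

definition hausdorff_dim :: "'a::metric_space set \<Rightarrow> real" where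
  "hausdorff_dim A = Inf {s. s \<ge> 0 \<and> hausdorff_measure s A = 0}"

end

theory Submission
  imports Defs
begin

text \<open>All maps of level n are homotheties of ratio 1 / (m n * k n) of the unit cube onto corner
  subcubes of its m n ^ d lattice subcubes, so Z_n(t) = P_n^d (P_n Q_n)^(-t) with
  P_n = m 1 \<cdots> m n and Q_n = k 1 \<cdots> k n.  If log P_n grows faster than any multiple of n
  while log Q_n \<le> n log 2 + o(log P_n), the lower pressure is positive exactly for t < d, so
  B(\<Phi>) = d.  The Hausdorff dimension vanishes because of rare bursts: at a burst level n the
  shrink factor k n is a power of 2 P_(n-1) with exponent tending to infinity, so the P_(n-1)^d
  cylinders of level n - 1, shrunk by k n, cover the limit set with arbitrarily small
  s-dimensional sum for every s > 0.  The superexponential growth of alpha pays for both.\<close>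

definition cube_lattice :: "nat \<Rightarrow> 'a::euclidean_space set" where
  "cube_lattice m = (\<lambda>f. \<Sum>b\<in>Basis. real (f b) *\<^sub>R b) ` (Basis \<rightarrow>\<^sub>E {..<m})"

lemma finite_cube_lattice: "finite (cube_lattice m)"
  unfolding cube_lattice_def by (auto intro!: finite_PiE)

lemma card_cube_lattice: "card (cube_lattice m :: 'a::euclidean_space set) = m ^ DIM('a)"
proof -
  have "inj_on (\<lambda>f. \<Sum>b\<in>Basis. real (f b) *\<^sub>R (b::'a)) (Basis \<rightarrow>\<^sub>E {..<m})"
  proof (rule inj_onI)
    fix f g assume f: "f \<in> Basis \<rightarrow>\<^sub>E {..<m}" and g: "g \<in> Basis \<rightarrow>\<^sub>E {..<m}"
      and eq: "(\<Sum>b\<in>Basis. real (f b) *\<^sub>R (b::'a)) = (\<Sum>b\<in>Basis. real (g b) *\<^sub>R b)"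
    have "f b = g b" if "b \<in> Basis" for b
      using arg_cong[OF eq, of "\<lambda>v. v \<bullet> b"] that by simp
    then show "f = g"
      by (rule PiE_ext[OF f g])
  qed
  then show ?thesis
    unfolding cube_lattice_def by (simp add: card_image card_PiE)
qed

lemma cube_lattice_coordinate:
  assumes "v \<in> cube_lattice m" "b \<in> Basis"
  obtains z where "z < m" "v \<bullet> b = real z"
  using assms unfolding cube_lattice_def by (force simp: PiE_iff)

text \<open>An enumeration of the lattice points, used to index the maps of one level by naturals.\<close>

definition lattice_enum :: "nat \<Rightarrow> nat \<Rightarrow> 'a::euclidean_space" where
  "lattice_enum m = (SOME h. bij_betw h {..<m ^ DIM('a)} (cube_lattice m))"

lemma bij_betw_lattice_enum:
  "bij_betw (lattice_enum m) {..<m ^ DIM('a)} (cube_lattice m :: 'a::euclidean_space set)"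
proof -
  obtain h :: "nat \<Rightarrow> 'a" where "bij_betw h {0..<card (cube_lattice m :: 'a set)} (cube_lattice m)"
    using ex_bij_betw_nat_finite[OF finite_cube_lattice[of m, where 'a='a]] by blast
  then have "\<exists>h. bij_betw h {..<m ^ DIM('a)} (cube_lattice m :: 'a set)"
    by (auto simp: card_cube_lattice atLeast0LessThan)
  then show ?thesis
    unfolding lattice_enum_def by (rule someI_ex)
qed

lemma lattice_enum_coordinate:
  assumes "i < m ^ DIM('a)" "b \<in> Basis"
  obtains z where "z < m" "(lattice_enum m i :: 'a::euclidean_space) \<bullet> b = real z"
proof -
  have "lattice_enum m i \<in> (cube_lattice m :: 'a set)"
    using bij_betw_apply[OF bij_betw_lattice_enum] assms(1) by blast
  then show ?thesis
    using cube_lattice_coordinate assms(2) that by blast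
qed

lemma lattice_enum_inj:
  assumes "i < m ^ DIM('a)" "i' < m ^ DIM('a)" "lattice_enum m i = (lattice_enum m i' :: 'a::euclidean_space)"
  shows "i = i'"
  using bij_betw_imp_inj_on[OF bij_betw_lattice_enum[where 'a='a]] assms
  by (auto dest: inj_onD)

lemma cmp_homothety:
  assumes "\<And>j i. \<exists>b. \<phi> j i = (\<lambda>x. c j *\<^sub>R x + b)"
  shows "\<exists>B. cmp \<phi> \<omega> k m = (\<lambda>x. (\<Prod>j\<in>{k..<k+m}. c j) *\<^sub>R x + (B::'a::real_vector))"
proof (induction m arbitrary: k)
  case 0
  show ?case by (auto intro!: exI[of _ 0])
next
  case (Suc m)
  obtain B where B: "cmp \<phi> \<omega> (Suc k) m = (\<lambda>x. (\<Prod>j\<in>{Suc k..<Suc k+m}. c j) *\<^sub>R x + B)"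
    using Suc by blast
  obtain b where b: "\<phi> k (\<omega> k) = (\<lambda>x. c k *\<^sub>R x + b)"
    using assms by blast
  have "(\<Prod>j\<in>{k..<k + Suc m}. c j) = c k * (\<Prod>j\<in>{Suc k..<Suc k+m}. c j)"
    by (subst prod.atLeast_Suc_lessThan) auto
  then have "cmp \<phi> \<omega> k (Suc m) = (\<lambda>x. (\<Prod>j\<in>{k..<k + Suc m}. c j) *\<^sub>R x + (c k *\<^sub>R B + b))"
    by (simp add: B b fun_eq_iff algebra_simps)
  then show ?case by blast
qed

lemma cmp_Suc_right: "cmp \<phi> \<omega> k (Suc m) = cmp \<phi> \<omega> k m \<circ> \<phi> (k + m) (\<omega> (k + m))"
proof (induction m arbitrary: k)
  case (Suc m)
  have "cmp \<phi> \<omega> k (Suc (Suc m)) = \<phi> k (\<omega> k) \<circ> cmp \<phi> \<omega> (Suc k) (Suc m)"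
    by simp
  also have "\<dots> = \<phi> k (\<omega> k) \<circ> (cmp \<phi> \<omega> (Suc k) m \<circ> \<phi> (Suc k + m) (\<omega> (Suc k + m)))"
    by (simp only: Suc.IH)
  finally show ?case
    by (simp add: comp_assoc)
qed simp

lemma cmp_cong: "(\<And>j. k \<le> j \<Longrightarrow> j < k + m \<Longrightarrow> \<omega> j = \<omega>' j) \<Longrightarrow> cmp \<phi> \<omega> k m = cmp \<phi> \<omega>' k m"
  by (induction m arbitrary: k) auto

lemma dnorm_homothety: "dnorm (\<lambda>x::'a::euclidean_space. R *\<^sub>R x + B) y = \<bar>R\<bar>"
proof -
  have "((\<lambda>x::'a. R *\<^sub>R x + B) has_derivative (\<lambda>h. R *\<^sub>R h)) (at y)"
    by (auto intro!: derivative_eq_intros)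
  then have "frechet_derivative (\<lambda>x::'a. R *\<^sub>R x + B) (at y) = (\<lambda>h. R *\<^sub>R h)"
    by (metis frechet_derivative_at)
  then show ?thesis
    by (simp add: dnorm_def onorm_scaleR[OF bounded_linear_ident] onorm_id)
qed

lemma normD_homothety: "X \<noteq> {} \<Longrightarrow> normD X (\<lambda>x::'a::euclidean_space. R *\<^sub>R x + B) = \<bar>R\<bar>"
  by (simp add: normD_def dnorm_homothety)

lemma conformal_C1_on_homothety:
  assumes "R > 0"
  shows "conformal_C1_on UNIV (\<lambda>x::'a::euclidean_space. R *\<^sub>R x + B)"
  unfolding conformal_C1_on_def
proof (intro conjI exI[of _ "\<lambda>_. R *\<^sub>R id_blinfun"])
  show "inj_on (\<lambda>x::'a. R *\<^sub>R x + B) UNIV"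
    using assms by (auto simp: inj_on_def)
qed (use assms in \<open>auto simp: scaleR_blinfun.rep_eq intro!: derivative_eq_intros\<close>)

lemma hausdorff_content_le_finite_cover:
  fixes U :: "'i \<Rightarrow> 'a::metric_space set"
  assumes "finite F" "A \<subseteq> (\<Union>i\<in>F. U i)"
    and "\<And>i. i \<in> F \<Longrightarrow> bounded (U i) \<and> diameter (U i) \<le> r"
    and "0 \<le> r" "r \<le> \<delta>" "s > 0"
  shows "hausdorff_content \<delta> s A \<le> ennreal (real (card F) * r powr s)"
proof -
  obtain h where h: "bij_betw h {0..<card F} F"
    using ex_bij_betw_nat_finite[OF assms(1)] by blast
  define V where "V j = (if j < card F then U (h j) else {})" for j
  have hF: "j < card F \<Longrightarrow> h j \<in> F" for j
    using bij_betw_apply[OF h] by simp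
  have "A \<subseteq> (\<Union>j. V j)"
  proof
    fix x assume "x \<in> A"
    then obtain i where "i \<in> F" "x \<in> U i"
      using assms(2) by blast
    moreover obtain j where "j < card F" "h j = i"
      using bij_betw_imp_surj_on[OF h] \<open>i \<in> F\<close> by (metis atLeastLessThan_iff imageE)
    ultimately show "x \<in> (\<Union>j. V j)"
      by (auto simp: V_def)
  qed
  moreover have "bounded (V j) \<and> diameter (V j) \<le> \<delta>" for j
    using assms(3)[OF hF, of j] assms(4,5) by (auto simp: V_def)
  ultimately have "hausdorff_content \<delta> s A \<le> (\<Sum>j. hweight s (V j))"
    unfolding hausdorff_content_def by (intro INF_lower) auto
  also have "\<dots> = (\<Sum>j<card F. hweight s (V j))"
    by (rule suminf_finite) (auto simp: V_def hweight_def)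
  also have "\<dots> \<le> (\<Sum>j<card F. ennreal (r powr s))"
  proof (rule sum_mono)
    fix j assume "j \<in> {..<card F}"
    then have "V j = {} \<or> diameter (V j) powr s \<le> r powr s"
      using assms(3)[OF hF, of j] assms(6) by (auto simp: V_def intro: powr_mono2 diameter_ge_0)
    then show "hweight s (V j) \<le> ennreal (r powr s)"
      using assms(6) by (auto simp: hweight_def ennreal_leI)
  qed
  also have "\<dots> = ennreal (real (card F) * r powr s)"
    by (simp add: ennreal_mult ennreal_of_nat_eq_real_of_nat)
  finally show ?thesis .
qed

lemma hausdorff_dim_eq_0I:
  assumes "\<And>s \<delta> \<epsilon>. s > 0 \<Longrightarrow> \<delta> > 0 \<Longrightarrow> \<epsilon> > 0 \<Longrightarrow> hausdorff_content \<delta> s A \<le> ennreal \<epsilon>"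
  shows "hausdorff_dim A = 0"
proof -
  have null: "hausdorff_measure s A = 0" if "s > 0" for s
  proof -
    have "hausdorff_content \<delta> s A \<le> 0" if "\<delta> > 0" for \<delta>
      by (rule ennreal_le_epsilon) (use assms[OF \<open>s > 0\<close> that] in simp)
    then show ?thesis
      by (simp add: hausdorff_measure_def)
  qed
  define T where "T = {s. 0 \<le> s \<and> hausdorff_measure s A = 0}"
  have "1 \<in> T" "bdd_below T"
    using null[of 1] by (auto simp: T_def intro: bdd_belowI[of _ 0])
  have "Inf T \<le> 0"
  proof (rule ccontr)
    assume "\<not> Inf T \<le> 0"
    then have "Inf T \<le> Inf T / 2"
      using null[of "Inf T / 2"] \<open>bdd_below T\<close> by (intro cInf_lower) (auto simp: T_def)
    with \<open>\<not> Inf T \<le> 0\<close> show False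
      by simp
  qed
  moreover have "T \<noteq> {}"
    using \<open>1 \<in> T\<close> by blast
  then have "0 \<le> Inf T"
    by (rule cInf_greatest) (simp add: T_def)
  ultimately show ?thesis
    by (simp add: hausdorff_dim_def T_def)
qed

section \<open>Lattice systems on the unit cube\<close>

text \<open>At level n the cube is divided into m n ^ d subcubes of side 1 / m n, and each
  map sends the cube onto the corner subcube of side 1 / (m n * k n) of one of them.\<close>

locale lattice_ifs =
  fixes m k :: "nat \<Rightarrow> nat"
  assumes m_pos: "\<And>n. 1 \<le> n \<Longrightarrow> 1 \<le> m n"
    and k_ge_2: "\<And>n. 1 \<le> n \<Longrightarrow> 2 \<le> k n"
begin

definition ratio :: "nat \<Rightarrow> real" where
  "ratio n = 1 / real (m n * k n)"

definition maps :: "nat \<Rightarrow> nat \<Rightarrow> 'a::euclidean_space \<Rightarrow> 'a" where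
  "maps n i x = ratio n *\<^sub>R (x + lattice_enum (m n) i)"

definition index :: "nat \<Rightarrow> nat \<Rightarrow> nat set" where
  "index D n = {..<m n ^ D}"

lemma ratio_pos: "1 \<le> n \<Longrightarrow> 0 < ratio n"
  using m_pos[of n] k_ge_2[of n] by (simp add: ratio_def)

lemma ratio_le: "1 \<le> n \<Longrightarrow> ratio n \<le> 1 / (2 * real (m n))"
proof -
  assume n: "1 \<le> n"
  have "2 * real (m n) \<le> real (m n) * real (k n)"
    using m_pos[OF n] k_ge_2[OF n] by (simp add: mult.commute mult_left_mono)
  then show ?thesis
    using m_pos[OF n] by (simp add: ratio_def divide_left_mono)
qed

lemma prod_ratio_pos: "0 < (\<Prod>j=1..n. ratio j)"
  by (rule prod_pos) (simp add: ratio_pos)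

lemma maps_homothety: "\<exists>b. maps n i = (\<lambda>x::'a::euclidean_space. ratio n *\<^sub>R x + b)"
  by (auto simp: maps_def fun_eq_iff algebra_simps)

lemma cmp_maps:
  "\<exists>B. cmp maps \<omega> j l = (\<lambda>x::'a::euclidean_space. (\<Prod>i\<in>{j..<j+l}. ratio i) *\<^sub>R x + B)"
  by (rule cmp_homothety) (rule maps_homothety)

lemma prod_ratio: "(\<Prod>j=1..n. ratio j) = 1 / (real (\<Prod>j=1..n. m j) * real (\<Prod>j=1..n. k j))"
  by (simp add: ratio_def prod_dividef prod.distrib)

lemma maps_into_corner:
  assumes "1 \<le> n" "i < m n ^ DIM('a)" "x \<in> cbox 0 (One::'a::euclidean_space)"
  shows "maps n i x \<in> cbox 0 ((1 / real (k n)) *\<^sub>R (One::'a))"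
  unfolding mem_box
proof (intro ballI conjI)
  fix b :: 'a assume b: "b \<in> Basis"
  obtain z where z: "z < m n" "lattice_enum (m n) i \<bullet> b = real z"
    using lattice_enum_coordinate[OF assms(2) b] by blast
  have x: "0 \<le> x \<bullet> b" "x \<bullet> b \<le> 1"
    using assms(3) b by (auto simp: mem_box)
  have maps_b: "maps n i x \<bullet> b = ratio n * (x \<bullet> b + real z)"
    by (simp add: maps_def inner_add_left z(2))
  show "0 \<bullet> b \<le> maps n i x \<bullet> b"
    using maps_b ratio_pos[OF assms(1)] x by simp
  have "x \<bullet> b + real z \<le> real (m n)"
    using x z(1) by linarith
  then have "ratio n * (x \<bullet> b + real z) \<le> ratio n * real (m n)"
    using ratio_pos[OF assms(1)] by (intro mult_left_mono) auto
  also have "\<dots> = 1 / real (k n)"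
    using m_pos[OF assms(1)] by (simp add: ratio_def)
  finally show "maps n i x \<bullet> b \<le> ((1 / real (k n)) *\<^sub>R One) \<bullet> b"
    using maps_b b by simp
qed

lemma maps_into_cube:
  assumes "1 \<le> n" "i < m n ^ DIM('a)" "x \<in> cbox 0 (One::'a::euclidean_space)"
  shows "maps n i x \<in> cbox 0 One"
proof -
  have "1 / real (k n) \<le> 1"
    using k_ge_2[OF assms(1)] by simp
  then show ?thesis
    using maps_into_corner[OF assms] by (auto simp: mem_box intro: order_trans)
qed

lemma maps_disjoint:
  assumes "1 \<le> n" "i < m n ^ DIM('a)" "i' < m n ^ DIM('a)" "i \<noteq> i'"
  shows "maps n i ` box 0 (One::'a::euclidean_space) \<inter> maps n i' ` box 0 One = {}"
proof (rule ccontr)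
  assume "\<not> ?thesis"
  then obtain x y where x: "x \<in> box 0 (One::'a)" and y: "y \<in> box 0 (One::'a)"
    and eq: "maps n i x = maps n i' y"
    by auto
  have shifts: "x + lattice_enum (m n) i = y + lattice_enum (m n) i'"
    using eq ratio_pos[OF assms(1)] by (simp add: maps_def)
  obtain b :: 'a where b: "b \<in> Basis" "lattice_enum (m n) i \<bullet> b \<noteq> lattice_enum (m n) i' \<bullet> b"
    using lattice_enum_inj[OF assms(2,3)] assms(4) euclidean_eqI by blast
  obtain z z' where z: "lattice_enum (m n) i \<bullet> b = real z" "lattice_enum (m n) i' \<bullet> b = real z'"
    using lattice_enum_coordinate[OF assms(2) b(1)] lattice_enum_coordinate[OF assms(3) b(1)] by metis
  have "x \<bullet> b + real z = y \<bullet> b + real z'"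
    using arg_cong[OF shifts, of "\<lambda>v. v \<bullet> b"] z by (simp add: inner_add_left)
  moreover have "0 < x \<bullet> b" "x \<bullet> b < 1" "0 < y \<bullet> b" "y \<bullet> b < 1"
    using x y b(1) by (auto simp: mem_box)
  moreover have "real z + 1 \<le> real z' \<or> real z' + 1 \<le> real z"
    using b(2) z by (auto simp flip: of_nat_Suc)
  ultimately show False
    by linarith
qed

lemma normD_maps: "1 \<le> n \<Longrightarrow> normD (cbox 0 (One::'a::euclidean_space)) (maps n i) = ratio n"
  using maps_homothety[of n i, where 'a='a] ratio_pos[of n]
  by (auto simp: normD_homothety box_ne_empty)

lemma NCIFS_maps: "NCIFS (cbox 0 (One::'a::euclidean_space)) (index DIM('a)) maps"
  unfolding NCIFS_def
proof (intro conjI)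
  show "admissible_X (cbox 0 (One::'a))"
    by (simp add: admissible_X_def box_ne_empty)
  show "\<forall>j\<ge>1. \<forall>i\<in>index DIM('a) j. maps j i ` cbox 0 One \<subseteq> cbox 0 (One::'a)"
    using maps_into_cube by (auto simp: index_def)
  show "\<forall>j\<ge>1. \<forall>i\<in>index DIM('a) j. \<forall>i'\<in>index DIM('a) j. i \<noteq> i' \<longrightarrow>
      maps j i ` interior (cbox 0 One) \<inter> maps j i' ` interior (cbox 0 (One::'a)) = {}"
  proof (intro allI impI ballI)
    fix j i i' assume "1 \<le> j" "i \<in> index DIM('a) j" "i' \<in> index DIM('a) j" "i \<noteq> i'"
    then show "maps j i ` interior (cbox 0 One) \<inter> maps j i' ` interior (cbox 0 (One::'a)) = {}"
      unfolding interior_cbox by (intro maps_disjoint) (auto simp: index_def)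
  qed
  have "conformal_C1_on UNIV (maps j i :: 'a \<Rightarrow> 'a)" if "1 \<le> j" for j i
  proof -
    obtain b where "maps j i = (\<lambda>x::'a. ratio j *\<^sub>R x + b)"
      using maps_homothety by blast
    then show ?thesis
      using conformal_C1_on_homothety[OF ratio_pos[OF that]] by simp
  qed
  moreover have "dnorm (cmp maps \<omega> j l) (x::'a) \<le> 1 * dnorm (cmp maps \<omega> j l) (y::'a)" for \<omega> j l x y
  proof -
    obtain B where "cmp maps \<omega> j l = (\<lambda>x::'a. (\<Prod>i\<in>{j..<j+l}. ratio i) *\<^sub>R x + B)"
      using cmp_maps by blast
    then show ?thesis
      by (simp add: dnorm_homothety)
  qed
  ultimately show "\<exists>V. open V \<and> connected V \<and> cbox 0 One \<subseteq> V \<and>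
       (\<forall>j\<ge>1. \<forall>i\<in>index DIM('a) j. conformal_C1_on V (maps j i :: 'a \<Rightarrow> 'a)) \<and>
       (\<exists>K\<ge>1. \<forall>j\<^sub>0\<ge>1. \<forall>l \<omega>. (\<forall>j\<in>{j\<^sub>0..<j\<^sub>0 + l}. \<omega> j \<in> index DIM('a) j) \<longrightarrow>
          (\<forall>x\<in>V. \<forall>y\<in>V. dnorm (cmp maps \<omega> j\<^sub>0 l) x \<le> K * dnorm (cmp maps \<omega> j\<^sub>0 l) (y::'a)))"
    by (intro exI[of _ UNIV] conjI exI[of _ 1]) auto
  have "normD (cbox 0 (One::'a)) (maps j i) \<le> 1/2" if "1 \<le> j" for j i
  proof -
    have "1 / (2 * real (m j)) \<le> 1/2"
      using m_pos[OF that] by (simp add: divide_le_eq)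
    then show ?thesis
      using ratio_le[OF that] normD_maps[OF that, of i, where 'a='a] by linarith
  qed
  then show "\<exists>\<eta><1. \<forall>j\<ge>1. \<forall>i\<in>index DIM('a) j. normD (cbox 0 (One::'a)) (maps j i) \<le> \<eta>"
    by (intro exI[of _ "1/2"]) auto
qed

lemma perfectly_balanced_maps:
  "perfectly_balanced (index DIM('a)) (maps :: nat \<Rightarrow> nat \<Rightarrow> 'a \<Rightarrow> 'a::euclidean_space)"
  unfolding perfectly_balanced_def affine_similarity_def
proof (intro allI impI)
  fix n :: nat assume n: "1 \<le> n"
  have "\<exists>Q b. linear Q \<and> (\<forall>x. norm (Q x) = norm x) \<and> (\<forall>x. (maps n i :: 'a \<Rightarrow> 'a) x = ratio n *\<^sub>R Q x + b)"
    for i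
  proof -
    obtain b where "maps n i = (\<lambda>x::'a. ratio n *\<^sub>R x + b)"
      using maps_homothety by blast
    then show ?thesis
      by (intro exI[of _ "\<lambda>x. x"] exI[of _ b]) (simp add: linear_id[unfolded id_def])
  qed
  then show "\<exists>r. \<forall>i\<in>index DIM('a) n. 0 < r \<and> (\<exists>Q b. linear Q \<and> (\<forall>x. norm (Q x) = norm x) \<and>
      (\<forall>x. (maps n i :: 'a \<Rightarrow> 'a) x = r *\<^sub>R Q x + b))"
    using ratio_pos[OF n] by blast
qed

lemma normD_cmp_maps:
  "normD (cbox 0 (One::'a::euclidean_space)) (cmp maps \<omega> 1 n) = (\<Prod>j=1..n. ratio j)"
proof -
  have "{1..<1+n} = {1..n}"
    by auto
  then obtain B where "cmp maps \<omega> 1 n = (\<lambda>x::'a. (\<Prod>j=1..n. ratio j) *\<^sub>R x + B)"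
    using cmp_maps[of \<omega> 1 n] by metis
  then show ?thesis
    using prod_ratio_pos[of n] by (simp add: normD_homothety box_ne_empty)
qed

lemma finite_words_index: "finite (words (index D) n)"
  by (simp add: words_def index_def finite_PiE)

lemma card_words_index: "card (words (index D) n) = (\<Prod>j=1..n. m j) ^ D"
  by (simp add: words_def index_def card_PiE prod_power_distrib)

lemma Zsum_maps:
  "Zsum (cbox 0 (One::'a::euclidean_space)) (index DIM('a)) maps n t =
     ennreal (real (\<Prod>j=1..n. m j) ^ DIM('a) * (\<Prod>j=1..n. ratio j) powr t)"
proof -
  have "Zsum (cbox 0 (One::'a)) (index DIM('a)) maps n t =
      (\<Sum>\<omega>\<in>words (index DIM('a)) n. ennreal (normD (cbox 0 (One::'a)) (cmp maps \<omega> 1 n) powr t))"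
    unfolding Zsum_def by (rule nn_integral_count_space_finite[OF finite_words_index])
  also have "\<dots> = (\<Sum>\<omega>\<in>words (index DIM('a)) n. ennreal ((\<Prod>j=1..n. ratio j) powr t))"
    by (simp only: normD_cmp_maps)
  also have "\<dots> = ennreal (real (\<Prod>j=1..n. m j) ^ DIM('a) * (\<Prod>j=1..n. ratio j) powr t)"
    by (simp add: card_words_index ennreal_of_nat_eq_real_of_nat ennreal_mult prod_nonneg)
  finally show ?thesis .
qed

lemma limit_set_subset_cylinders:
  "limit_set (cbox 0 One) (index DIM('a)) maps \<subseteq>
     (\<Union>\<omega>\<in>words (index DIM('a)) p. cmp maps \<omega> 1 p ` cbox 0 ((1 / real (k (Suc p))) *\<^sub>R (One::'a::euclidean_space)))"
proof
  fix x :: 'a assume "x \<in> limit_set (cbox 0 One) (index DIM('a)) maps"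
  then obtain \<omega> y where \<omega>: "\<omega> \<in> words (index DIM('a)) (Suc p)" and y: "y \<in> cbox 0 (One::'a)"
    and x: "x = cmp maps \<omega> 1 (Suc p) y"
    unfolding limit_set_def by blast
  have "x = cmp maps \<omega> 1 p (maps (Suc p) (\<omega> (Suc p)) y)"
    unfolding x cmp_Suc_right[of maps \<omega> 1 p] by simp
  moreover have "cmp maps \<omega> 1 p = cmp maps (restrict \<omega> {1..p}) 1 p"
    by (rule cmp_cong) auto
  ultimately have "x = cmp maps (restrict \<omega> {1..p}) 1 p (maps (Suc p) (\<omega> (Suc p)) y)"
    by metis
  moreover have "restrict \<omega> {1..p} \<in> words (index DIM('a)) p"
    using \<omega> by (auto simp: words_def PiE_iff)
  moreover have "maps (Suc p) (\<omega> (Suc p)) y \<in> cbox 0 ((1 / real (k (Suc p))) *\<^sub>R One)"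
    using \<omega> by (intro maps_into_corner y) (auto simp: words_def index_def PiE_iff)
  ultimately show "x \<in> (\<Union>\<omega>\<in>words (index DIM('a)) p. cmp maps \<omega> 1 p ` cbox 0 ((1 / real (k (Suc p))) *\<^sub>R One))"
    by blast
qed

lemma cylinder_diameter:
  assumes "0 \<le> c"
  shows "bounded (cmp maps \<omega> 1 p ` cbox 0 (c *\<^sub>R (One::'a::euclidean_space)))"
    and "diameter (cmp maps \<omega> 1 p ` cbox 0 (c *\<^sub>R (One::'a))) \<le> real DIM('a) * c * (\<Prod>j=1..p. ratio j)"
proof -
  define R where "R = (\<Prod>j=1..p. ratio j)"
  have R: "0 \<le> R"
    using prod_ratio_pos[of p] by (simp add: R_def)
  obtain B where "cmp maps \<omega> 1 p = (\<lambda>x::'a. R *\<^sub>R x + B)"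
    using cmp_maps[of \<omega> 1 p] by (auto simp: R_def atLeastLessThanSuc_atLeastAtMost)
  moreover have "0 \<in> cbox 0 (c *\<^sub>R (One::'a))"
    using assms by (simp add: mem_box)
  ultimately have image: "cmp maps \<omega> 1 p ` cbox 0 (c *\<^sub>R One) = cbox B ((R * c) *\<^sub>R One + B)"
    using R by (auto simp: image_affinity_cbox)
  then show "bounded (cmp maps \<omega> 1 p ` cbox 0 (c *\<^sub>R (One::'a)))"
    by simp
  have "norm (One::'a) \<le> real DIM('a)"
    using norm_le_l1[of "One::'a"] by simp
  then have "norm ((R * c) *\<^sub>R (One::'a)) \<le> R * c * real DIM('a)"
    using R assms by (simp add: mult_left_mono)
  then show "diameter (cmp maps \<omega> 1 p ` cbox 0 (c *\<^sub>R (One::'a))) \<le> real DIM('a) * c * R"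
    unfolding image using R assms
    by (subst diameter_cbox) (auto simp: dist_norm algebra_simps)
qed

end

section \<open>The branching schedule\<close>

text \<open>The state (j, P, Q) after step n records the number j of bursts so far and the products
  P and Q of the branching numbers and of the shrink factors.\<close>

fun schedule :: "(nat \<Rightarrow> nat) \<Rightarrow> nat \<Rightarrow> nat \<times> nat \<times> nat" where
  "schedule a 0 = (0, 1, 1)"
| "schedule a (Suc n) = (case schedule a n of (j, P, Q) \<Rightarrow>
     if (2 * P * Q) ^ ((j + 1)\<^sup>2) \<le> a (Suc n) then (j + 1, P * a (Suc n), Q * (2 * P) ^ (j + 1))
     else (j, P * min (j + 1) (a (Suc n)), Q * 2))"

definition bursts :: "(nat \<Rightarrow> nat) \<Rightarrow> nat \<Rightarrow> nat" where
  "bursts a n = fst (schedule a n)"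

definition branch_prod :: "(nat \<Rightarrow> nat) \<Rightarrow> nat \<Rightarrow> nat" where
  "branch_prod a n = fst (snd (schedule a n))"

definition shrink_prod :: "(nat \<Rightarrow> nat) \<Rightarrow> nat \<Rightarrow> nat" where
  "shrink_prod a n = snd (snd (schedule a n))"

definition is_burst :: "(nat \<Rightarrow> nat) \<Rightarrow> nat \<Rightarrow> bool" where
  "is_burst a n \<longleftrightarrow>
     (2 * branch_prod a (n - 1) * shrink_prod a (n - 1)) ^ ((bursts a (n - 1) + 1)\<^sup>2) \<le> a n"

definition branching :: "(nat \<Rightarrow> nat) \<Rightarrow> nat \<Rightarrow> nat" where
  "branching a n = (if is_burst a n then a n else min (bursts a (n - 1) + 1) (a n))"

definition shrink :: "(nat \<Rightarrow> nat) \<Rightarrow> nat \<Rightarrow> nat" where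
  "shrink a n = (if is_burst a n then (2 * branch_prod a (n - 1)) ^ (bursts a (n - 1) + 1) else 2)"

lemma schedule_0: "bursts a 0 = 0" "branch_prod a 0 = 1" "shrink_prod a 0 = 1"
  by (simp_all add: bursts_def branch_prod_def shrink_prod_def)

lemma schedule_Suc:
  "bursts a (Suc n) = bursts a n + (if is_burst a (Suc n) then 1 else 0)"
  "branch_prod a (Suc n) = branch_prod a n * branching a (Suc n)"
  "shrink_prod a (Suc n) = shrink_prod a n * shrink a (Suc n)"
  by (simp_all add: bursts_def branch_prod_def shrink_prod_def is_burst_def branching_def
      shrink_def split: prod.split)

lemma bursts_mono: "m \<le> n \<Longrightarrow> bursts a m \<le> bursts a n"
  by (induction n rule: dec_induct) (auto simp: schedule_Suc)

lemma bounded_mono_eventually_const: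
  fixes f :: "nat \<Rightarrow> nat"
  assumes "mono f" "\<And>n. f n < J"
  obtains N where "\<And>n. N \<le> n \<Longrightarrow> f n = f N"
proof -
  have fin: "finite (range f)"
    by (rule finite_subset[of _ "{..<J}"]) (use assms(2) in auto)
  have "Max (range f) \<in> range f"
    using fin by (rule Max_in) simp
  then obtain N where N: "f N = Max (range f)"
    by (metis imageE)
  have "f n = f N" if "N \<le> n" for n
  proof -
    have "f n \<le> f N"
      unfolding N using fin by (rule Max_ge) simp
    then show ?thesis
      using monoD[OF assms(1) that] by simp
  qed
  then show ?thesis
    by (rule that)
qed

locale positive_seq =
  fixes a :: "nat \<Rightarrow> nat"
  assumes pos: "\<And>n. 1 \<le> n \<Longrightarrow> 1 \<le> a n"
begin

lemma branching_pos: "1 \<le> n \<Longrightarrow> 1 \<le> branching a n"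
  using pos by (simp add: branching_def)

lemma branching_le: "branching a n \<le> a n"
  by (simp add: branching_def)

lemma branch_prod_pos: "1 \<le> branch_prod a n"
proof (induction n)
  case (Suc n)
  then show ?case
    using branching_pos[of "Suc n"] by (simp add: schedule_Suc)
qed (simp add: schedule_0)

lemma shrink_ge_2: "2 \<le> shrink a n"
proof -
  have P: "1 \<le> branch_prod a (n - 1)"
    by (rule branch_prod_pos)
  then have "2 \<le> 2 * branch_prod a (n - 1)"
    by linarith
  also have "\<dots> \<le> (2 * branch_prod a (n - 1)) ^ (bursts a (n - 1) + 1)"
    using P by (intro self_le_power) auto
  finally show ?thesis
    by (simp add: shrink_def)
qed

lemma shrink_prod_pos: "1 \<le> shrink_prod a n"
proof (induction n)
  case (Suc n)
  then show ?case
    using shrink_ge_2[of "Suc n"] by (simp add: schedule_Suc)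
qed (simp add: schedule_0)

lemma branch_prod_eq_prod: "branch_prod a n = (\<Prod>j=1..n. branching a j)"
  by (induction n) (simp_all add: schedule_0 schedule_Suc prod.nat_ivl_Suc')

lemma shrink_prod_eq_prod: "shrink_prod a n = (\<Prod>j=1..n. shrink a j)"
  by (induction n) (simp_all add: schedule_0 schedule_Suc prod.nat_ivl_Suc')

sublocale lattice_ifs "branching a" "shrink a"
  by standard (erule branching_pos, rule shrink_ge_2)

text \<open>The invariant that keeps the shrink factors negligible.\<close>

lemma shrink_prod_pow_bursts_le:
  "shrink_prod a n ^ bursts a n \<le> 2 ^ (n * bursts a n) * branch_prod a n"
proof (induction n)
  case 0
  show ?case by (simp add: schedule_0)
next
  case (Suc n)
  define j P Q where "j = bursts a n" "P = branch_prod a n" "Q = shrink_prod a n"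
  have P: "1 \<le> P" and Q: "1 \<le> Q"
    using branch_prod_pos shrink_prod_pos by (auto simp: j_P_Q_def)
  show ?case
  proof (cases "is_burst a (Suc n)")
    case True
    have "shrink_prod a (Suc n) ^ bursts a (Suc n) = (Q * (2 * P) ^ (j + 1)) ^ (j + 1)"
      using True by (simp add: schedule_Suc shrink_def j_P_Q_def)
    also have "\<dots> = Q ^ (j + 1) * (2 * P) ^ ((j + 1)\<^sup>2)"
      by (metis power_mult power_mult_distrib power2_eq_square)
    also have "\<dots> \<le> Q ^ ((j + 1)\<^sup>2) * (2 * P) ^ ((j + 1)\<^sup>2)"
      using Q by (intro mult_right_mono power_increasing) (auto simp: power2_eq_square)
    also have "\<dots> = (2 * P * Q) ^ ((j + 1)\<^sup>2)"
      by (simp add: power_mult_distrib)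
    also have "\<dots> \<le> a (Suc n)"
      using True unfolding is_burst_def j_P_Q_def by simp
    also have "\<dots> \<le> P * a (Suc n)"
      using mult_le_mono1[OF P, of "a (Suc n)"] by simp
    also have "\<dots> \<le> 2 ^ (Suc n * bursts a (Suc n)) * branch_prod a (Suc n)"
      using True by (simp add: schedule_Suc branching_def j_P_Q_def)
    finally show ?thesis .
  next
    case False
    have "shrink_prod a (Suc n) ^ bursts a (Suc n) = 2 ^ j * Q ^ j"
      using False by (simp add: schedule_Suc shrink_def j_P_Q_def power_mult_distrib)
    also have "\<dots> \<le> 2 ^ j * (2 ^ (n * j) * P)"
      using Suc by (simp add: j_P_Q_def)
    also have "\<dots> \<le> 2 ^ (Suc n * j) * (P * branching a (Suc n))"
      using branching_pos[of "Suc n"] by (simp add: power_add)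
    also have "\<dots> = 2 ^ (Suc n * bursts a (Suc n)) * branch_prod a (Suc n)"
      using False by (simp add: schedule_Suc j_P_Q_def)
    finally show ?thesis .
  qed
qed

lemma ln_shrink_prod_le:
  assumes "1 \<le> bursts a n"
  shows "ln (real (shrink_prod a n))
           \<le> real n * ln 2 + ln (real (branch_prod a n)) / real (bursts a n)"
proof -
  define j P Q where "j = bursts a n" "P = branch_prod a n" "Q = shrink_prod a n"
  have P: "1 \<le> real P" and Q: "1 \<le> real Q"
    using branch_prod_pos shrink_prod_pos by (auto simp: j_P_Q_def)
  have "real (Q ^ j) \<le> real (2 ^ (n * j) * P)"
    unfolding of_nat_le_iff j_P_Q_def by (rule shrink_prod_pow_bursts_le)
  then have "ln (real Q ^ j) \<le> ln (2 ^ (n * j) * real P)"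
    using P Q by (subst ln_le_cancel_iff) auto
  then have "real j * ln (real Q) \<le> real j * (real n * ln 2) + ln (real P)"
    using P Q by (simp add: ln_realpow ln_mult algebra_simps)
  then show ?thesis
    using assms by (simp add: j_P_Q_def field_simps)
qed

lemma growth_without_bursts:
  assumes const: "\<And>n. N \<le> n \<Longrightarrow> bursts a n = bursts a N" and "N \<le> n"
  shows "2 * branch_prod a n * shrink_prod a n
           \<le> 2 * branch_prod a N * shrink_prod a N * (2 * (bursts a N + 1)) ^ (n - N)"
  using \<open>N \<le> n\<close>
proof (induction n rule: dec_induct)
  case base
  show ?case by simp
next
  case (step n)
  have no_burst: "\<not> is_burst a (Suc n)"
    using const[of n] const[of "Suc n"] step.hyps schedule_Suc(1)[of a n] by auto
  then have "2 * branch_prod a (Suc n) * shrink_prod a (Suc n)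
      = (2 * branch_prod a n * shrink_prod a n) * (2 * branching a (Suc n))"
    by (simp add: schedule_Suc shrink_def)
  also have "\<dots> \<le> (2 * branch_prod a n * shrink_prod a n) * (2 * (bursts a N + 1))"
    using no_burst const[OF step.hyps(1)] by (intro mult_left_mono) (auto simp: branching_def)
  also have "\<dots> \<le> 2 * branch_prod a N * shrink_prod a N * (2 * (bursts a N + 1)) ^ (n - N)
      * (2 * (bursts a N + 1))"
    using step.IH by (rule mult_right_mono) simp
  also have "\<dots> = 2 * branch_prod a N * shrink_prod a N * (2 * (bursts a N + 1)) ^ (Suc n - N)"
    using step.hyps(1) by (simp add: Suc_diff_le ac_simps)
  finally show ?case .
qed

end

locale superexp_seq = positive_seq +
  assumes superexp: "\<And>c. eventually (\<lambda>n. c * real n \<le> ln (real (a n))) sequentially"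
begin

lemma eventually_gt_geometric:
  assumes "0 < C" "0 < G"
  shows "eventually (\<lambda>n. C * G ^ n < real (a n)) sequentially"
  using superexp[of "\<bar>ln C\<bar> + \<bar>ln G\<bar> + 1"] eventually_ge_at_top[of 1]
proof eventually_elim
  case (elim n)
  have n: "1 \<le> real n"
    using elim(2) by simp
  have "ln C \<le> \<bar>ln C\<bar> * real n"
    using mult_left_mono[OF n abs_ge_zero[of "ln C"]] abs_ge_self[of "ln C"] by linarith
  moreover have "ln G * real n \<le> \<bar>ln G\<bar> * real n"
    using n by (intro mult_right_mono) auto
  ultimately have "ln C + ln G * real n < \<bar>ln C\<bar> * real n + \<bar>ln G\<bar> * real n + real n"
    using n by linarith
  then have "ln (C * G ^ n) < (\<bar>ln C\<bar> + \<bar>ln G\<bar> + 1) * real n"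
    using assms by (simp add: ln_mult ln_realpow algebra_simps)
  then have "ln (C * G ^ n) < ln (real (a n))"
    using elim(1) by linarith
  then show ?case
    using assms pos[of n] elim(2) by (subst (asm) ln_less_cancel_iff) auto
qed

lemma bursts_unbounded: "\<exists>n. J \<le> bursts a n"
proof (rule ccontr)
  assume "\<nexists>n. J \<le> bursts a n"
  then have bound: "bursts a n < J" for n
    by (simp add: not_le)
  have "mono (bursts a)"
    by (rule monoI) (rule bursts_mono)
  then obtain N where N: "\<And>n. N \<le> n \<Longrightarrow> bursts a n = bursts a N"
    using bounded_mono_eventually_const bound by blast
  define E C G where "E = (bursts a N + 1)\<^sup>2" "C = 2 * branch_prod a N * shrink_prod a N"
    "G = 2 * (bursts a N + 1)"
  have a_bound: "real (a (Suc n)) < real C ^ E * (real G ^ E) ^ n" if "N \<le> n" for n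
  proof -
    have "\<not> is_burst a (Suc n)"
      using N[of n] N[of "Suc n"] that schedule_Suc(1)[of a n] by auto
    then have "a (Suc n) < (2 * branch_prod a n * shrink_prod a n) ^ E"
      using N[OF that] by (simp add: is_burst_def not_le E_C_G_def)
    also have "\<dots> \<le> (C * G ^ (n - N)) ^ E"
      using growth_without_bursts[OF N that] by (intro power_mono) (auto simp: E_C_G_def)
    also have "\<dots> \<le> (C * G ^ n) ^ E"
      by (intro power_mono mult_left_mono power_increasing) (auto simp: E_C_G_def)
    finally have "real (a (Suc n)) < real ((C * G ^ n) ^ E)"
      by (simp only: of_nat_less_iff)
    moreover have "(real G ^ n) ^ E = (real G ^ E) ^ n"
      by (simp flip: power_mult add: mult.commute)
    ultimately show ?thesis
      by (simp add: power_mult_distrib)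
  qed
  have "1 \<le> C" "1 \<le> G"
    using branch_prod_pos[of N] shrink_prod_pos[of N] by (auto simp: E_C_G_def)
  have "eventually (\<lambda>n. real (a n) < real C ^ E / real G ^ E * (real G ^ E) ^ n) sequentially"
    unfolding eventually_sequentially
  proof (intro exI[of _ "Suc N"] allI impI)
    fix n assume "Suc N \<le> n"
    then obtain m where "n = Suc m" "N \<le> m"
      by (cases n) auto
    then show "real (a n) < real C ^ E / real G ^ E * (real G ^ E) ^ n"
      using a_bound[of m] \<open>1 \<le> G\<close> by simp
  qed
  moreover have "eventually (\<lambda>n. real C ^ E / real G ^ E * (real G ^ E) ^ n < real (a n)) sequentially"
    using \<open>1 \<le> C\<close> \<open>1 \<le> G\<close> by (intro eventually_gt_geometric) auto
  ultimately have "eventually (\<lambda>n. False) sequentially"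
    by eventually_elim simp
  then show False
    by simp
qed

lemma eventually_bursts_ge: "eventually (\<lambda>n. J \<le> bursts a n) sequentially"
proof -
  obtain N where "J \<le> bursts a N"
    using bursts_unbounded by blast
  then show ?thesis
    unfolding eventually_sequentially using bursts_mono order_trans by blast
qed

lemma eventually_branching_ge: "eventually (\<lambda>n. M \<le> branching a n) sequentially"
proof -
  obtain N where "\<And>n. N \<le> n \<Longrightarrow> M \<le> bursts a n"
    using eventually_bursts_ge[of M] unfolding eventually_sequentially by blast
  then have "eventually (\<lambda>n. M \<le> bursts a (n - 1)) sequentially"
    unfolding eventually_sequentially by (intro exI[of _ "Suc N"]) auto
  moreover have "eventually (\<lambda>n. (real M + 1) * 1 ^ n < real (a n)) sequentially"
    by (intro eventually_gt_geometric) auto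
  ultimately show ?thesis
  proof eventually_elim
    case (elim n)
    then have "M \<le> min (bursts a (n - 1) + 1) (a n)"
      by simp
    then show ?case
      by (simp add: branching_def)
  qed
qed

lemma eventually_ln_branch_prod_ge:
  "eventually (\<lambda>n. c * real n \<le> ln (real (branch_prod a n))) sequentially"
proof -
  define M where "M = nat \<lceil>exp (2 * max c 0)\<rceil>"
  have M: "exp (2 * max c 0) \<le> real M"
    unfolding M_def by linarith
  have "0 < real M"
    using M exp_gt_zero[of "2 * max c 0"] by linarith
  with M have ln_M: "2 * max c 0 \<le> ln (real M)"
    by (simp add: ln_ge_iff)
  obtain N where N: "\<And>n. N \<le> n \<Longrightarrow> M \<le> branching a n"
    using eventually_branching_ge[of M] by (auto simp: eventually_sequentially)
  have power_le: "M ^ (n - N) \<le> branch_prod a n" if "N \<le> n" for n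
    using that
  proof (induction n rule: dec_induct)
    case base
    show ?case using branch_prod_pos[of N] by simp
  next
    case (step n)
    then have "M ^ (n - N) * M \<le> branch_prod a n * branching a (Suc n)"
      using N[of "Suc n"] by (intro mult_le_mono) auto
    then have "M ^ (Suc n - N) \<le> branch_prod a n * branching a (Suc n)"
      using step.hyps by (simp add: Suc_diff_le mult.commute)
    then show ?case
      by (simp add: schedule_Suc)
  qed
  show ?thesis
    unfolding eventually_sequentially
  proof (intro exI[of _ "2 * N"] allI impI)
    fix n assume n: "2 * N \<le> n"
    have "real n \<le> 2 * real (n - N)"
      using n by (simp add: of_nat_diff)
    then have "max c 0 * real n \<le> max c 0 * (2 * real (n - N))"
      by (intro mult_left_mono) auto
    moreover have "c * real n \<le> max c 0 * real n"
      by (intro mult_right_mono) auto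
    ultimately have "c * real n \<le> real (n - N) * (2 * max c 0)"
      by (simp add: mult_ac)
    also have "\<dots> \<le> real (n - N) * ln (real M)"
      using ln_M by (intro mult_left_mono) auto
    also have "\<dots> = ln (real (M ^ (n - N)))"
      using \<open>0 < real M\<close> by (simp add: ln_realpow)
    also have "\<dots> \<le> ln (real (branch_prod a n))"
      using power_le[of n] n \<open>0 < real M\<close> branch_prod_pos[of n] by (subst ln_le_cancel_iff) auto
    finally show "c * real n \<le> ln (real (branch_prod a n))" .
  qed
qed

lemma obtain_burst:
  obtains n where "1 \<le> n" "is_burst a n" "J \<le> bursts a n"
    "shrink a n = (2 * branch_prod a (n - 1)) ^ bursts a n"
proof -
  define n where "n = (LEAST n. Suc J \<le> bursts a n)"
  have n: "Suc J \<le> bursts a n"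
    unfolding n_def using bursts_unbounded by (rule LeastI_ex)
  then obtain p where p: "n = Suc p"
    by (cases n) (auto simp: schedule_0)
  have "p < n"
    using p by simp
  then have "\<not> Suc J \<le> bursts a p"
    unfolding n_def by (rule not_less_Least)
  then have "is_burst a n"
    using n p schedule_Suc(1)[of a p] by (auto split: if_splits)
  moreover have "bursts a n = bursts a p + 1"
    using calculation p by (simp add: schedule_Suc)
  ultimately show ?thesis
    using n p by (intro that[of n]) (simp_all add: shrink_def)
qed

end

section \<open>Pressure and the Bowen parameter\<close>

lemma liminf_ereal_div_ge:
  assumes "eventually (\<lambda>n. c * real n \<le> f n) sequentially"
  shows "ereal c \<le> liminf (\<lambda>n. ereal (f n) / ereal (real n))"
proof -
  have "eventually (\<lambda>n. ereal c \<le> ereal (f n) / ereal (real n)) sequentially"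
    using assms eventually_ge_at_top[of 1]
  proof eventually_elim
    case (elim n)
    then show ?case
      by (simp add: field_simps)
  qed
  then have "liminf (\<lambda>n. ereal c) \<le> liminf (\<lambda>n. ereal (f n) / ereal (real n))"
    by (rule Liminf_mono)
  then show ?thesis
    by (simp add: Liminf_const)
qed

lemma liminf_ereal_div_nonpos:
  assumes "\<And>n. f n \<le> 0"
  shows "liminf (\<lambda>n. ereal (f n) / ereal (real n)) \<le> 0"
proof -
  have "eventually (\<lambda>n. ereal (f n) / ereal (real n) \<le> 0) sequentially"
    using eventually_ge_at_top[of 1]
  proof eventually_elim
    case (elim n)
    then show ?case
      using assms[of n] by (simp add: divide_nonpos_nonneg)
  qed
  then have "liminf (\<lambda>n. ereal (f n) / ereal (real n)) \<le> liminf (\<lambda>n. 0)"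
    by (rule Liminf_mono)
  then show ?thesis
    by (simp add: Liminf_const)
qed

lemma Sup_ereal_atLeastLessThan:
  assumes "0 < D"
  shows "Sup (ereal ` {0..<D}) = ereal D"
proof -
  have "Sup (ereal ` {0..<D}) \<le> ereal D"
    by (rule Sup_least) auto
  moreover have "ereal 0 \<le> Sup (ereal ` {0..<D})"
    using assms by (intro Sup_upper) auto
  ultimately have "ereal (Sup {0..<D}) = Sup (ereal ` {0..<D})"
    by (intro ereal_Sup) auto
  then show ?thesis
    using cSup_atLeastLessThan[OF assms] by simp
qed

context positive_seq
begin

lemma lower_pressure_maps:
  "lower_pressure (cbox 0 One) (index DIM('a)) (maps :: nat \<Rightarrow> nat \<Rightarrow> 'a \<Rightarrow> 'a::euclidean_space) t =
     liminf (\<lambda>n. ereal ((real DIM('a) - t) * ln (real (branch_prod a n))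
       - t * ln (real (shrink_prod a n))) / ereal (real n))"
proof -
  have "lnE (Zsum (cbox 0 One) (index DIM('a)) (maps :: nat \<Rightarrow> nat \<Rightarrow> 'a \<Rightarrow> 'a) n t) =
      ereal ((real DIM('a) - t) * ln (real (branch_prod a n)) - t * ln (real (shrink_prod a n)))" for n
  proof -
    define P Q where "P = real (branch_prod a n)" "Q = real (shrink_prod a n)"
    have P: "1 \<le> P" and Q: "1 \<le> Q"
      using branch_prod_pos shrink_prod_pos by (auto simp: P_Q_def)
    have "Zsum (cbox 0 One) (index DIM('a)) (maps :: nat \<Rightarrow> nat \<Rightarrow> 'a \<Rightarrow> 'a) n t =
        ennreal (P ^ DIM('a) * (1 / (P * Q)) powr t)"
      unfolding Zsum_maps prod_ratio by (simp add: P_Q_def branch_prod_eq_prod shrink_prod_eq_prod)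
    moreover have "0 < P ^ DIM('a) * (1 / (P * Q)) powr t"
      using P Q by simp
    moreover have "ln (P ^ DIM('a) * (1 / (P * Q)) powr t) = (real DIM('a) - t) * ln P - t * ln Q"
      using P Q by (simp add: ln_mult ln_realpow ln_powr ln_div algebra_simps)
    ultimately show ?thesis
      using P Q by (simp add: lnE_def P_Q_def)
  qed
  then show ?thesis
    by (simp add: lower_pressure_def)
qed

lemma pressure_exponent_nonpos:
  assumes "real D \<le> t"
  shows "(real D - t) * ln (real (branch_prod a n)) - t * ln (real (shrink_prod a n)) \<le> 0"
proof -
  have "0 \<le> ln (real (branch_prod a n))" "0 \<le> ln (real (shrink_prod a n))" "0 \<le> t"
    using branch_prod_pos[of n] shrink_prod_pos[of n] assms of_nat_0_le_iff[of D] by auto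
  then have "(real D - t) * ln (real (branch_prod a n)) \<le> 0" "0 \<le> t * ln (real (shrink_prod a n))"
    using assms by (auto intro: mult_nonpos_nonneg)
  then show ?thesis
    by linarith
qed

lemma pressure_exponent_ge:
  assumes t: "0 \<le> t" "t < real D"
    and bursts: "1 \<le> bursts a n" "2 * t \<le> (real D - t) * real (bursts a n)"
    and branch: "2 * (t * ln 2 + 1) * real n \<le> (real D - t) * ln (real (branch_prod a n))"
  shows "real n \<le> (real D - t) * ln (real (branch_prod a n)) - t * ln (real (shrink_prod a n))"
proof -
  define LP LQ j where "LP = ln (real (branch_prod a n))" "LQ = ln (real (shrink_prod a n))"
    "j = real (bursts a n)"
  have "LQ \<le> real n * ln 2 + LP / j"
    using ln_shrink_prod_le[OF bursts(1)] by (simp add: LP_LQ_j_def)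
  then have "t * LQ \<le> t * (real n * ln 2) + t / j * LP"
    using t(1) by (auto dest: mult_left_mono[of _ _ t] simp: algebra_simps)
  moreover have "t / j * LP \<le> (real D - t) / 2 * LP"
  proof -
    have "t / j \<le> (real D - t) / 2"
      using bursts by (simp add: LP_LQ_j_def field_simps)
    moreover have "0 \<le> LP"
      using branch_prod_pos[of n] by (simp add: LP_LQ_j_def)
    ultimately show ?thesis
      by (rule mult_right_mono)
  qed
  moreover have "(real D - t) * LP = 2 * ((real D - t) / 2 * LP)"
    by simp
  moreover have "2 * (t * ln 2 + 1) * real n = 2 * (t * (real n * ln 2)) + 2 * real n"
    by (simp add: algebra_simps)
  moreover have "2 * (t * ln 2 + 1) * real n \<le> (real D - t) * LP"
    using branch by (simp add: LP_LQ_j_def)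
  ultimately have "real n \<le> (real D - t) * LP - t * LQ"
    by linarith
  then show ?thesis
    by (simp add: LP_LQ_j_def)
qed
end

context superexp_seq
begin

lemma eventually_pressure_exponent_ge:
  assumes "0 \<le> t" "t < real D"
  shows "eventually (\<lambda>n. 1 * real n
           \<le> (real D - t) * ln (real (branch_prod a n)) - t * ln (real (shrink_prod a n))) sequentially"
proof -
  define J where "J = nat \<lceil>2 * t / (real D - t)\<rceil> + 1"
  have "2 * t / (real D - t) \<le> real J"
    unfolding J_def by linarith
  then have J: "2 * t \<le> (real D - t) * real J" "1 \<le> J"
    using assms by (simp_all add: pos_divide_le_eq mult.commute J_def)
  define c where "c = 2 * (t * ln 2 + 1) / (real D - t)"
  show ?thesis
    using eventually_bursts_ge[of J] eventually_ln_branch_prod_ge[of c]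
  proof eventually_elim
    case (elim n)
    have "(real D - t) * real J \<le> (real D - t) * real (bursts a n)"
      using elim(1) assms(2) by (intro mult_left_mono) auto
    moreover have "(real D - t) * (c * real n) \<le> (real D - t) * ln (real (branch_prod a n))"
      using elim(2) assms(2) by (intro mult_left_mono) auto
    moreover have "(real D - t) * (c * real n) = 2 * (t * ln 2 + 1) * real n"
      using assms(2) by (simp add: c_def)
    ultimately show ?case
      using pressure_exponent_ge[OF assms] elim(1) J by simp
  qed
qed

lemma bowen_param_maps:
  "bowen_param (cbox 0 One) (index DIM('a)) (maps :: nat \<Rightarrow> nat \<Rightarrow> 'a \<Rightarrow> 'a::euclidean_space)
     = ereal (real DIM('a))"
proof -
  have "0 < lower_pressure (cbox 0 One) (index DIM('a)) (maps :: nat \<Rightarrow> nat \<Rightarrow> 'a \<Rightarrow> 'a) t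
      \<longleftrightarrow> t < real DIM('a)" if "0 \<le> t" for t
  proof
    assume "t < real DIM('a)"
    then have "ereal 1 \<le> lower_pressure (cbox 0 One) (index DIM('a)) (maps :: nat \<Rightarrow> nat \<Rightarrow> 'a \<Rightarrow> 'a) t"
      unfolding lower_pressure_maps
      by (intro liminf_ereal_div_ge eventually_pressure_exponent_ge that)
    then show "0 < lower_pressure (cbox 0 One) (index DIM('a)) (maps :: nat \<Rightarrow> nat \<Rightarrow> 'a \<Rightarrow> 'a) t"
      by (rule less_le_trans[rotated]) simp
  next
    assume "0 < lower_pressure (cbox 0 One) (index DIM('a)) (maps :: nat \<Rightarrow> nat \<Rightarrow> 'a \<Rightarrow> 'a) t"
    moreover have "lower_pressure (cbox 0 One) (index DIM('a)) (maps :: nat \<Rightarrow> nat \<Rightarrow> 'a \<Rightarrow> 'a) t \<le> 0"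
      if "real DIM('a) \<le> t"
      unfolding lower_pressure_maps
      by (intro liminf_ereal_div_nonpos pressure_exponent_nonpos that)
    ultimately show "t < real DIM('a)"
      by (meson not_le not_less)
  qed
  then have "{t. 0 \<le> t \<and> 0 < lower_pressure (cbox 0 One) (index DIM('a)) (maps :: nat \<Rightarrow> nat \<Rightarrow> 'a \<Rightarrow> 'a) t}
      = {0..<real DIM('a)}"
    by auto
  then show ?thesis
    by (simp add: bowen_param_def Sup_ereal_atLeastLessThan)
qed

lemma max_contraction_tendsto_0:
  "(\<lambda>n. SUP i\<in>index D n. normD (cbox 0 (One::'a::euclidean_space)) (maps n i)) \<longlonglongrightarrow> 0"
proof (rule tendsto_sandwich[of "\<lambda>_. 0" _ _ "\<lambda>n. 1 / real (branching a n)"])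
  have "eventually (\<lambda>n. (SUP i\<in>index D n. normD (cbox 0 (One::'a)) (maps n i)) = ratio n) sequentially"
    using eventually_ge_at_top[of 1]
  proof eventually_elim
    case (elim n)
    then have "0 \<in> index D n"
      using branching_pos[OF elim] by (simp add: index_def)
    then have "index D n \<noteq> {}"
      by blast
    then show ?case
      using elim by (simp add: normD_maps)
  qed
  moreover have "eventually (\<lambda>n. 0 \<le> ratio n \<and> ratio n \<le> 1 / real (branching a n)) sequentially"
    using eventually_ge_at_top[of 1]
  proof eventually_elim
    case (elim n)
    have "1 / (2 * real (branching a n)) \<le> 1 / real (branching a n)"
      using branching_pos[OF elim] by (simp add: frac_le)
    then show ?case
      using ratio_pos[OF elim] ratio_le[OF elim] by simp
  qed
  ultimately show "eventually (\<lambda>n. 0 \<le> (SUP i\<in>index D n. normD (cbox 0 (One::'a)) (maps n i))) sequentially"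
    and "eventually (\<lambda>n. (SUP i\<in>index D n. normD (cbox 0 (One::'a)) (maps n i))
      \<le> 1 / real (branching a n)) sequentially"
    by (auto elim: eventually_mono[OF eventually_conj])
  have "filterlim (\<lambda>n. real (branching a n)) at_top sequentially"
    unfolding filterlim_at_top
  proof
    fix Z :: real
    show "eventually (\<lambda>n. Z \<le> real (branching a n)) sequentially"
      using eventually_branching_ge[of "nat \<lceil>Z\<rceil>"] by eventually_elim linarith
  qed
  then show "(\<lambda>n. 1 / real (branching a n)) \<longlonglongrightarrow> 0"
    by (intro tendsto_divide_0[OF tendsto_const] filterlim_at_top_imp_at_infinity)
qed simp

end

section \<open>Hausdorff dimension of the limit set\<close>

lemma powr_cover_bound:
  fixes P D s :: real and j :: nat
  assumes "1 \<le> P" "0 < D" "0 < s" "D \<le> real j * s"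
  shows "P powr D * (D / (2 * P) ^ j) powr s \<le> D powr s / (2 powr s) ^ j"
proof -
  define A B where "A = P powr (real j * s)" "B = 2 powr (real j * s)"
  have pos: "0 < A" "0 < B"
    using assms(1) by (auto simp: A_B_def)
  have "((2 * P) ^ j) powr s = B * A"
    using assms(1) by (simp add: A_B_def powr_realpow[symmetric] powr_powr powr_mult)
  then have "P powr D * (D / (2 * P) ^ j) powr s = (P powr D / A) * (D powr s / B)"
    using assms(1,2) by (simp add: powr_divide)
  also have "\<dots> \<le> 1 * (D powr s / B)"
    using assms pos by (intro mult_right_mono) (auto simp: A_B_def intro: powr_mono)
  also have "B = (2 powr s) ^ j"
    by (simp add: A_B_def powr_powr[symmetric] powr_realpow mult.commute)
  finally show ?thesis
    by simp
qed

lemma obtain_cover_exponent: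
  fixes D s \<delta> \<epsilon> :: real
  assumes D: "0 < D" and s: "0 < s" and \<delta>: "0 < \<delta>" and \<epsilon>: "0 < \<epsilon>"
  obtains J where "\<And>j P. J \<le> j \<Longrightarrow> 1 \<le> P \<Longrightarrow>
    D / (2 * P) ^ j \<le> \<delta> \<and> P powr D * (D / (2 * P) ^ j) powr s \<le> \<epsilon>"
proof -
  obtain J1 where J1: "D powr s / \<epsilon> < (2 powr s) ^ J1"
    using real_arch_pow[of "2 powr s"] s by auto
  obtain J2 where J2: "D / \<delta> < 2 ^ J2"
    using real_arch_pow[of 2] by auto
  have "D / (2 * P) ^ j \<le> \<delta> \<and> P powr D * (D / (2 * P) ^ j) powr s \<le> \<epsilon>"
    if j: "max (max J1 J2) (nat \<lceil>D / s\<rceil>) \<le> j" and P: "1 \<le> P" for j P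
  proof
    have "(2::real) ^ J2 \<le> 2 ^ j"
      using j by (intro power_increasing) auto
    also have "\<dots> \<le> (2 * P) ^ j"
      using P by (intro power_mono) auto
    finally have "\<delta> * 2 ^ J2 \<le> \<delta> * (2 * P) ^ j"
      using \<delta> by simp
    moreover have "D < \<delta> * 2 ^ J2"
      using J2 \<delta> by (simp add: pos_divide_less_eq mult.commute)
    moreover have "0 < (2 * P) ^ j"
      using P by simp
    ultimately show "D / (2 * P) ^ j \<le> \<delta>"
      by (subst pos_divide_le_eq) auto
    have "D / s \<le> real j"
      using j by linarith
    then have "P powr D * (D / (2 * P) ^ j) powr s \<le> D powr s / (2 powr s) ^ j"
      using s by (intro powr_cover_bound[OF P D s]) (simp add: field_simps)
    also have "\<dots> \<le> \<epsilon>"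
    proof -
      have "(2 powr s) ^ J1 \<le> (2 powr s) ^ j"
        using j s by (intro power_increasing) (auto simp: ge_one_powr_ge_zero)
      then have "\<epsilon> * (2 powr s) ^ J1 \<le> \<epsilon> * (2 powr s) ^ j"
        using \<epsilon> by simp
      moreover have "D powr s < \<epsilon> * (2 powr s) ^ J1"
        using J1 \<epsilon> by (simp add: pos_divide_less_eq mult.commute)
      ultimately show ?thesis
        by (simp add: divide_le_eq)
    qed
    finally show "P powr D * (D / (2 * P) ^ j) powr s \<le> \<epsilon>" .
  qed
  then show ?thesis
    using that by blast
qed

context positive_seq
begin

lemma hausdorff_content_burst_cover:
  fixes p j :: nat and \<delta> s :: real
  defines "P \<equiv> real (branch_prod a p)"
  defines "r \<equiv> real DIM('a) / (2 * P) ^ j"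
  assumes shrink: "shrink a (Suc p) = (2 * branch_prod a p) ^ j" and "r \<le> \<delta>" "0 < s"
  shows "hausdorff_content \<delta> s
           (limit_set (cbox 0 One) (index DIM('a)) (maps :: nat \<Rightarrow> nat \<Rightarrow> 'a \<Rightarrow> 'a::euclidean_space))
         \<le> ennreal (P powr real DIM('a) * r powr s)"
proof -
  have P: "1 \<le> P"
    using branch_prod_pos by (simp add: P_def)
  then have r: "0 \<le> r"
    by (simp add: r_def)
  have "hausdorff_content \<delta> s (limit_set (cbox 0 One) (index DIM('a)) (maps :: nat \<Rightarrow> nat \<Rightarrow> 'a \<Rightarrow> 'a))
      \<le> ennreal (real (card (words (index DIM('a)) p)) * r powr s)"
  proof (rule hausdorff_content_le_finite_cover[OF finite_words_index limit_set_subset_cylinders _ r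
        \<open>r \<le> \<delta>\<close> \<open>0 < s\<close>])
    fix \<omega>
    have "1 \<le> real (branch_prod a p) * real (shrink_prod a p)"
      using mult_mono[of 1 "real (branch_prod a p)" 1 "real (shrink_prod a p)"]
        branch_prod_pos[of p] shrink_prod_pos[of p] by simp
    then have "(\<Prod>j=1..p. ratio j) \<le> 1"
      unfolding prod_ratio branch_prod_eq_prod[symmetric] shrink_prod_eq_prod[symmetric] by simp
    then have "real DIM('a) * (1 / real (shrink a (Suc p))) * (\<Prod>j=1..p. ratio j) \<le> r"
      using shrink P by (simp add: r_def P_def mult_left_le divide_right_mono)
    then show "bounded (cmp maps \<omega> 1 p ` cbox 0 ((1 / real (shrink a (Suc p))) *\<^sub>R (One::'a))) \<and>
        diameter (cmp maps \<omega> 1 p ` cbox 0 ((1 / real (shrink a (Suc p))) *\<^sub>R (One::'a))) \<le> r"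
      using cylinder_diameter[of "1 / real (shrink a (Suc p))" \<omega> p, where 'a='a] by auto
  qed
  moreover have "real (card (words (index DIM('a)) p)) = P powr real DIM('a)"
    unfolding card_words_index branch_prod_eq_prod[symmetric]
    using P by (simp add: P_def powr_realpow)
  ultimately show ?thesis
    by simp
qed

end

context superexp_seq
begin

lemma hausdorff_content_limit_set_le:
  assumes "0 < s" "0 < \<delta>" "0 < \<epsilon>"
  shows "hausdorff_content \<delta> s
           (limit_set (cbox 0 One) (index DIM('a)) (maps :: nat \<Rightarrow> nat \<Rightarrow> 'a \<Rightarrow> 'a::euclidean_space))
         \<le> ennreal \<epsilon>"
proof -
  obtain J where J: "\<And>j P. J \<le> j \<Longrightarrow> 1 \<le> P \<Longrightarrow> real DIM('a) / (2 * P) ^ j \<le> \<delta> \<and>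
      P powr real DIM('a) * (real DIM('a) / (2 * P) ^ j) powr s \<le> \<epsilon>"
    using obtain_cover_exponent[of "real DIM('a)" s \<delta> \<epsilon>] assms by auto
  obtain n where n: "1 \<le> n" "J \<le> bursts a n" "shrink a n = (2 * branch_prod a (n - 1)) ^ bursts a n"
    using obtain_burst by metis
  have P: "1 \<le> real (branch_prod a (n - 1))"
    using branch_prod_pos by simp
  show ?thesis
    using hausdorff_content_burst_cover[of "n - 1" "bursts a n" \<delta> s, where 'a='a]
      J[OF n(2) P] n(1,3) assms(1) order_trans ennreal_leI by fastforce
qed

lemma hausdorff_dim_limit_set:
  "hausdorff_dim (limit_set (cbox 0 One) (index DIM('a)) (maps :: nat \<Rightarrow> nat \<Rightarrow> 'a \<Rightarrow> 'a::euclidean_space)) = 0"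
  by (intro hausdorff_dim_eq_0I hausdorff_content_limit_set_le)

end

text \<open>Taking at most the d-th root of alpha n branches per coordinate keeps the number of maps
  of level n below alpha n and preserves superexponential growth.\<close>

definition root_floor :: "nat \<Rightarrow> nat \<Rightarrow> nat" where
  "root_floor D x = nat \<lfloor>real x powr (1 / real D)\<rfloor>"

lemma root_floor:
  assumes "1 \<le> D" "1 \<le> x"
  shows "1 \<le> root_floor D x" "root_floor D x ^ D \<le> x"
    "real x powr (1 / real D) \<le> 2 * real (root_floor D x)"
proof -
  define y where "y = real x powr (1 / real D)"
  have y: "1 \<le> y"
    unfolding y_def using assms by (intro ge_one_powr_ge_zero) auto
  have floor: "real (root_floor D x) = of_int \<lfloor>y\<rfloor>"
    using y by (simp add: root_floor_def y_def)
  show "1 \<le> root_floor D x"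
    using y by (simp add: root_floor_def y_def[symmetric] le_nat_iff)
  have "real (root_floor D x) ^ D \<le> y ^ D"
    using floor y by (intro power_mono) auto
  also have "y ^ D = real x"
    using assms y by (simp add: y_def powr_powr flip: powr_realpow)
  finally show "root_floor D x ^ D \<le> x"
    by (simp flip: of_nat_power)
  have "y < real_of_int \<lfloor>y\<rfloor> + 1" "1 \<le> real_of_int \<lfloor>y\<rfloor>"
    using y by (linarith, simp)
  with floor have "y \<le> 2 * real (root_floor D x)"
    by linarith
  then show "real x powr (1 / real D) \<le> 2 * real (root_floor D x)"
    by (simp add: y_def)
qed

lemma superexp_seq_root_floor:
  assumes D: "1 \<le> D" and pos: "\<forall>n\<ge>1. 0 < \<alpha> n"
    and lim: "filterlim (\<lambda>n. ln (real (\<alpha> n)) / real n) at_top sequentially"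
  shows "superexp_seq (\<lambda>n. root_floor D (\<alpha> n))"
proof unfold_locales
  show "1 \<le> root_floor D (\<alpha> n)" if "1 \<le> n" for n
    using root_floor(1)[OF D] pos that by (simp add: Suc_le_eq)
  fix c :: real
  have "eventually (\<lambda>n. real D * (\<bar>c\<bar> + 1) \<le> ln (real (\<alpha> n)) / real n) sequentially"
    using lim by (simp add: filterlim_at_top)
  then show "eventually (\<lambda>n. c * real n \<le> ln (real (root_floor D (\<alpha> n)))) sequentially"
    using eventually_ge_at_top[of 1]
  proof eventually_elim
    case (elim n)
    have \<alpha>: "1 \<le> \<alpha> n" and n: "1 \<le> real n"
      using pos elim(2) by (auto simp: Suc_le_eq)
    have "(\<bar>c\<bar> + 1) * real n \<le> ln (real (\<alpha> n)) / real D"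
      using elim(1) n D by (simp add: field_simps)
    also have "\<dots> = ln (real (\<alpha> n) powr (1 / real D))"
      using \<alpha> by (simp add: ln_powr)
    also have "\<dots> \<le> ln (2 * real (root_floor D (\<alpha> n)))"
      using root_floor[OF D \<alpha>] \<alpha> by (subst ln_le_cancel_iff) auto
    also have "\<dots> = ln 2 + ln (real (root_floor D (\<alpha> n)))"
      using root_floor(1)[OF D \<alpha>] by (simp add: ln_mult)
    finally have "\<bar>c\<bar> * real n + real n \<le> ln 2 + ln (real (root_floor D (\<alpha> n)))"
      by (simp add: algebra_simps)
    moreover have "c * real n \<le> \<bar>c\<bar> * real n"
      using n by (intro mult_right_mono) auto
    ultimately show ?case
      using ln_2_less_1 n by linarith
  qed
qed

theorem theorem6p2:
  fixes \<alpha> :: "nat \<Rightarrow> nat"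
  assumes "\<forall>n\<ge>1. \<alpha> n > 0"
    and "filterlim (\<lambda>n. ln (real (\<alpha> n)) / real n) at_top sequentially"
  shows "\<exists>(X :: 'a::euclidean_space set) I \<phi>.
           NCIFS X I \<phi> \<and> perfectly_balanced I \<phi> \<and>
           (\<forall>n\<ge>1. finite (I n) \<and> card (I n) \<le> \<alpha> n) \<and>
           ((\<lambda>n. SUP a\<in>I n. normD X (\<phi> n a)) \<longlonglongrightarrow> 0) \<and>
           hausdorff_dim (limit_set X I \<phi>) = 0 \<and>
           bowen_param X I \<phi> = ereal (real DIM('a))"
proof -
  define a where "a n = root_floor DIM('a) (\<alpha> n)" for n
  have D: "1 \<le> DIM('a)"
    by (simp add: Suc_le_eq)
  interpret superexp_seq a
    unfolding a_def using D assms by (rule superexp_seq_root_floor)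
  have card_index: "card (index DIM('a) n) \<le> \<alpha> n" if "1 \<le> n" for n
  proof -
    have "card (index DIM('a) n) \<le> a n ^ DIM('a)"
      by (simp add: index_def power_mono branching_le)
    also have "\<dots> \<le> \<alpha> n"
      using root_floor(2)[OF D, of "\<alpha> n"] assms(1) that by (simp add: a_def Suc_le_eq)
    finally show ?thesis .
  qed
  show ?thesis
    by (intro exI[of _ "cbox 0 One"] exI[of _ "index DIM('a)"] exI[of _ maps] conjI allI impI
        NCIFS_maps perfectly_balanced_maps max_contraction_tendsto_0 hausdorff_dim_limit_set
        bowen_param_maps card_index) (simp add: index_def)
qed

end
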